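(* Let $\mathcal X=\{1,\dots,N\}$, let $m>0$, and let $p,w$ be probability distributions on $\mathcal X$ with $p(x)\ge m$ and $w(x)\ge m$ for all $x\in\mathcal X$. Then for every probability distribution $v$ on $\mathcal X$, \[ D(w\parallel p)-D(v\parallel p)\le \log\frac1m\cdot\lVert w-v\rVert . \]
   Context: All logarithms are natural. For distributions $q,r$ on $\mathcal X$ with $r(x)>0$ for all $x$, $D(q\parallel r)=\sum_{x:\,q(x)>0}q(x)\log\frac{q(x)}{r(x)}$. For distributions $p,q$, $\lVert p-q\rVert=\sum_{x\in\mathcal X}|p(x)-q(x)|$. *)

theory Defs
  imports Complex_Main
begin

definition is_distr :: "nat \<Rightarrow> (nat \<Rightarrow> real) \<Rightarrow> bool" where
  "is_distr N q \<longleftrightarrow> (\<forall>x\<in>{1..N}. q x \<ge> 0) \<and> (\<Sum>x=1..N. q x) = 1"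

definition KL :: "nat \<Rightarrow> (nat \<Rightarrow> real) \<Rightarrow> (nat \<Rightarrow> real) \<Rightarrow> real" where
  "KL N q r = (\<Sum>x\<in>{x\<in>{1..N}. q x > 0}. q x * ln (q x / r x))"

definition l1dist :: "nat \<Rightarrow> (nat \<Rightarrow> real) \<Rightarrow> (nat \<Rightarrow> real) \<Rightarrow> real" where
  "l1dist N p q = (\<Sum>x=1..N. \<bar>p x - q x\<bar>)"

end

theory Submission
  imports Defs
begin

text \<open>Write \<open>L x = ln (w x / p x)\<close>, so that \<open>D(w\<parallel>p) = \<Sum> w x L x\<close>. By \<open>ln t \<le> t - 1\<close>, each
  term of \<open>D(v\<parallel>p)\<close> satisfies \<open>v x ln (v x / p x) \<ge> v x L x - (w x - v x)\<close>; summing, the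
  correction terms cancel because \<open>v\<close> and \<open>w\<close> both have total mass one, leaving
  \<open>D(w\<parallel>p) - D(v\<parallel>p) \<le> \<Sum> (w x - v x) L x\<close>. Finally \<open>w x\<close> and \<open>p x\<close> both lie in \<open>[m, 1]\<close>,
  so \<open>\<bar>L x\<bar> \<le> ln (1/m)\<close>.\<close>

lemma is_distr_le_one:
  assumes "is_distr N q" "x \<in> {1..N}"
  shows "q x \<le> 1"
proof -
  have "q x \<le> (\<Sum>y=1..N. q y)"
    using assms by (intro member_le_sum) (auto simp: is_distr_def)
  thus ?thesis using assms by (simp add: is_distr_def)
qed

lemma KL_eq_sum_if:
  "KL N q r = (\<Sum>x=1..N. if q x > 0 then q x * ln (q x / r x) else 0)"
  unfolding KL_def by (simp add: sum.inter_filter[symmetric] Collect_conj_eq Int_commute)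

lemma KL_eq_sum_of_pos:
  assumes "\<forall>x\<in>{1..N}. q x > 0"
  shows "KL N q r = (\<Sum>x=1..N. q x * ln (q x / r x))"
  using assms by (simp add: KL_eq_sum_if)

lemma mult_ln_ratio_ge_diff:
  fixes v w :: real
  assumes "v > 0" "w > 0"
  shows "v - w \<le> v * ln (v / w)"
proof -
  have "v * ln (w / v) \<le> v * (w / v - 1)"
    using assms by (intro mult_left_mono ln_le_minus_one) auto
  also have "\<dots> = w - v"
    using assms by (simp add: field_simps)
  finally have "v * ln (w / v) \<le> w - v" .
  moreover have "ln (v / w) = - ln (w / v)"
    using assms by (simp add: ln_div)
  ultimately show ?thesis by simp
qed

lemma KL_term_ge:
  fixes v w p :: real
  assumes "v \<ge> 0" "w > 0" "p > 0"
  shows "v * ln (w / p) - (w - v) \<le> (if v > 0 then v * ln (v / p) else 0)"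
proof (cases "v > 0")
  case True
  have "ln (v / p) = ln (v / w) + ln (w / p)"
    using True assms by (simp add: ln_div)
  with mult_ln_ratio_ge_diff[OF True \<open>w > 0\<close>] True show ?thesis
    by (simp add: distrib_left)
next
  case False
  with assms show ?thesis by simp
qed

lemma abs_ln_ratio_le:
  fixes a b m :: real
  assumes "m > 0" "m \<le> a" "a \<le> 1" "m \<le> b" "b \<le> 1"
  shows "\<bar>ln (a / b)\<bar> \<le> ln (1 / m)"
proof -
  have "ln m \<le> ln a" "ln a \<le> 0" "ln m \<le> ln b" "ln b \<le> 0"
    using assms by auto
  moreover have "ln (a / b) = ln a - ln b" "ln (1 / m) = - ln m"
    using assms by (simp_all add: ln_div)
  ultimately show ?thesis by linarith
qed

lemma mult_le_abs_mult_bound: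
  fixes a b c :: real
  assumes "\<bar>b\<bar> \<le> c"
  shows "a * b \<le> \<bar>a\<bar> * c"
proof -
  have "a * b \<le> \<bar>a\<bar> * \<bar>b\<bar>"
    by (metis abs_ge_self abs_mult)
  also have "\<dots> \<le> \<bar>a\<bar> * c"
    using assms by (intro mult_left_mono) auto
  finally show ?thesis .
qed

theorem lemma3:
  fixes N :: nat and m :: real and p w v :: "nat \<Rightarrow> real"
  assumes "m > 0"
    and "is_distr N p" and "is_distr N w"
    and "\<forall>x\<in>{1..N}. p x \<ge> m" and "\<forall>x\<in>{1..N}. w x \<ge> m"
    and "is_distr N v"
  shows "KL N w p - KL N v p \<le> ln (1 / m) * l1dist N w v"
proof -
  define L where "L x = ln (w x / p x)" for x
  have pos: "w x > 0" "p x > 0" if "x \<in> {1..N}" for x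
    using assms(1,4,5) that by force+
  have L_bound: "\<bar>L x\<bar> \<le> ln (1 / m)" if "x \<in> {1..N}" for x
    unfolding L_def using assms that is_distr_le_one by (intro abs_ln_ratio_le) auto
  have "KL N w p - KL N v p = (\<Sum>x=1..N. w x * L x - (if v x > 0 then v x * ln (v x / p x) else 0))"
    using pos by (simp add: KL_eq_sum_of_pos KL_eq_sum_if L_def sum_subtractf)
  also have "\<dots> \<le> (\<Sum>x=1..N. (w x - v x) * L x + (w x - v x))"
  proof (intro sum_mono)
    fix x assume x: "x \<in> {1..N}"
    have "v x \<ge> 0" using assms(6) x by (simp add: is_distr_def)
    from KL_term_ge[OF this pos[OF x]] show "w x * L x - (if v x > 0 then v x * ln (v x / p x) else 0)
        \<le> (w x - v x) * L x + (w x - v x)"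
      by (simp add: L_def algebra_simps)
  qed
  also have "\<dots> = (\<Sum>x=1..N. (w x - v x) * L x)"
    using assms(3,6) by (simp add: sum.distrib sum_subtractf is_distr_def)
  also have "\<dots> \<le> (\<Sum>x=1..N. \<bar>w x - v x\<bar> * ln (1 / m))"
    using L_bound by (intro sum_mono mult_le_abs_mult_bound) simp
  also have "\<dots> = ln (1 / m) * l1dist N w v"
    by (simp add: l1dist_def sum_distrib_left mult.commute)
  finally show ?thesis .
qed

end
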